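(* Let $p\in(0,1)$, $\gamma>0$, $\beta_*>0$, and set $\gamma_1:=\gamma/p$. Let $K$ be a kernel satisfying [A1]–[A4] and $g_K(s):=sK(s)$. Let $E_1,E_2,\dots$ be iid standard exponential random variables and $u_{j,k}:=j/(k+1)$. Then, as $k\to\infty$, $$\pi_k:=\frac1{k+1}\sum_{i=2}^k u_{i,k}^{\beta_*\gamma}\Big(\frac1i\sum_{j=2}^i u_{j,k}^{p-1}g_K'(u_{j,k}^p)\Big)E_i\ \xrightarrow{\ \mathbf P\ }\ \frac1{p^2}\int_0^1 t^{\gamma_1\beta_*}K(t)\,dt.$$
   Context: Kernel assumptions: [A1] $K$ is nonincreasing and right-continuous on $\mathbb R$; [A2] $K(s)=0$ for $s\notin(0,1]$ and $K(s)\ge0$ for $s\in(0,1]$; [A3] $\int_{\mathbb R}K(s)\,ds=1$; [A4] $K$ and its first and second Lebesgue derivatives $K',K''$ are bounded. *)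

theory Defs
  imports "HOL-Probability.Probability"
begin

definition gK :: "(real \<Rightarrow> real) \<Rightarrow> real \<Rightarrow> real" where
  "gK K s = s * K s"

definition u :: "nat \<Rightarrow> nat \<Rightarrow> real" where
  "u j k = real j / (real k + 1)"

definition conv_in_prob :: "'a measure \<Rightarrow> (nat \<Rightarrow> 'a \<Rightarrow> real) \<Rightarrow> real \<Rightarrow> bool" where
  "conv_in_prob M X c \<longleftrightarrow>
     (\<forall>\<epsilon>>0. (\<lambda>k. measure M {\<omega> \<in> space M. \<bar>X k \<omega> - c\<bar> > \<epsilon>}) \<longlonglongrightarrow> 0)"

end

theory Submission
  imports Defs
begin

(* The weights of the E_i are deterministic, so the claim is a weak law of large numbers for a
   weighted sum of independent Exp(1) variables: by Chebyshev's inequality it suffices that the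
   sum of the weights converges to the limit and the sum of their squares tends to 0.
   With h = 1/(k+1), the inner sum h * Sum_j u_j^(p-1) g_K'(u_j^p) is a Riemann sum for
   Phi(t) = g_K(t^p)/p, hence equals Phi(u_i) - Phi(u_1) up to O(h^(p/2)).  The outer sum then
   becomes a Riemann sum of theta(s) = s^(b-1) Phi(s), b = beta*gamma, whose primitive is
   Theta(s) = Psi(s^p)/p^2 with Psi(t) = integral of x^(b/p) K(x) over [0,t] (substitute t = s^p).
   Both integrands are singular at 0; the Riemann-sum estimate only needs |f'(s)| <= M s^(a-1)
   with a > -1. *)

section \<open>Weighted sums of independent random variables\<close>

lemma (in prob_space) indep_vars_centered_weighted_sum_square:
  fixes X :: "'i \<Rightarrow> 'a \<Rightarrow> real" and a :: "'i \<Rightarrow> real"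
  assumes indep: "indep_vars (\<lambda>_. borel) X I" and I: "finite I"
    and square_int: "\<And>i. i \<in> I \<Longrightarrow> integrable M (\<lambda>\<omega>. (X i \<omega>)\<^sup>2)"
    and var: "\<And>i. i \<in> I \<Longrightarrow> variance (X i) = v"
  defines "Y \<equiv> \<lambda>\<omega>. \<Sum>i\<in>I. a i * (X i \<omega> - expectation (X i))"
  shows "integrable M (\<lambda>\<omega>. (Y \<omega>)\<^sup>2)" "expectation (\<lambda>\<omega>. (Y \<omega>)\<^sup>2) = v * (\<Sum>i\<in>I. (a i)\<^sup>2)"
proof -
  define D where "D i \<omega> = X i \<omega> - expectation (X i)" for i \<omega>
  have meas: "X i \<in> borel_measurable M" if "i \<in> I" for i
    using indep that by (auto simp: indep_vars_def)
  have int: "integrable M (X i)" if "i \<in> I" for i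
    using square_integrable_imp_integrable[OF meas square_int] that by blast
  have intD: "integrable M (D i)" and meanD: "expectation (D i) = 0"
    and intD2: "integrable M (\<lambda>\<omega>. (D i \<omega>)\<^sup>2)" and varD: "expectation (\<lambda>\<omega>. (D i \<omega>)\<^sup>2) = v"
    if "i \<in> I" for i
    using int[OF that] square_int[OF that] var[OF that] unfolding D_def power2_diff
    by (auto simp: prob_space)
  have indD: "indep_vars (\<lambda>_. borel) D I"
    unfolding D_def by (rule indep_vars_compose2[OF indep]) auto
  have DD: "integrable M (\<lambda>\<omega>. D i \<omega> * D j \<omega>) \<and>
      expectation (\<lambda>\<omega>. D i \<omega> * D j \<omega>) = (if i = j then v else 0)"
    if "i \<in> I" "j \<in> I" for i j
  proof (cases "i = j")
    case True
    then show ?thesis using intD2 varD that by (simp add: power2_eq_square)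
  next
    case False
    have ij: "indep_vars (\<lambda>_. borel) D {i, j}"
      using indep_vars_subset[OF indD] that by auto
    have "integrable M (\<lambda>\<omega>. \<Prod>k\<in>{i,j}. D k \<omega>)"
      "expectation (\<lambda>\<omega>. \<Prod>k\<in>{i,j}. D k \<omega>) = (\<Prod>k\<in>{i,j}. expectation (D k))"
      using indep_vars_integrable[OF _ ij] indep_vars_lebesgue_integral[OF _ ij] intD that by auto
    then show ?thesis using False meanD that by simp
  qed
  have YD: "Y \<omega> = (\<Sum>i\<in>I. a i * D i \<omega>)" for \<omega>
    unfolding Y_def D_def ..
  have Y2: "(Y \<omega>)\<^sup>2 = (\<Sum>i\<in>I. \<Sum>j\<in>I. a i * a j * (D i \<omega> * D j \<omega>))" for \<omega>
    unfolding YD power2_eq_square sum_product by (simp add: algebra_simps)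
  show "integrable M (\<lambda>\<omega>. (Y \<omega>)\<^sup>2)"
    unfolding Y2 using DD by (intro Bochner_Integration.integrable_sum) auto
  have "expectation (\<lambda>\<omega>. (Y \<omega>)\<^sup>2) = (\<Sum>i\<in>I. \<Sum>j\<in>I. a i * a j * (if i = j then v else 0))"
    unfolding Y2 using DD by (simp add: Bochner_Integration.integral_sum)
  also have "\<dots> = v * (\<Sum>i\<in>I. (a i)\<^sup>2)"
    using I by (simp add: sum.delta if_distrib sum_distrib_left power2_eq_square mult_ac cong: if_cong)
  finally show "expectation (\<lambda>\<omega>. (Y \<omega>)\<^sup>2) = v * (\<Sum>i\<in>I. (a i)\<^sup>2)" .
qed

lemma (in prob_space) indep_vars_Chebyshev_weighted_sum:
  fixes X :: "'i \<Rightarrow> 'a \<Rightarrow> real" and a :: "'i \<Rightarrow> real"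
  assumes indep: "indep_vars (\<lambda>_. borel) X I" and I: "finite I"
    and square_int: "\<And>i. i \<in> I \<Longrightarrow> integrable M (\<lambda>\<omega>. (X i \<omega>)\<^sup>2)"
    and var: "\<And>i. i \<in> I \<Longrightarrow> variance (X i) = v"
    and eps: "\<epsilon> > 0"
  shows "prob {\<omega> \<in> space M. \<epsilon> \<le> \<bar>(\<Sum>i\<in>I. a i * X i \<omega>) - (\<Sum>i\<in>I. a i * expectation (X i))\<bar>}
           \<le> v * (\<Sum>i\<in>I. (a i)\<^sup>2) / \<epsilon>\<^sup>2"
proof -
  define Y where "Y \<omega> = (\<Sum>i\<in>I. a i * (X i \<omega> - expectation (X i)))" for \<omega>
  have meas: "X i \<in> borel_measurable M" if "i \<in> I" for i
    using indep that by (auto simp: indep_vars_def)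
  then have int: "integrable M (X i)" if "i \<in> I" for i
    using square_integrable_imp_integrable[OF meas square_int] that by blast
  have Y_square: "integrable M (\<lambda>\<omega>. (Y \<omega>)\<^sup>2)" "expectation (\<lambda>\<omega>. (Y \<omega>)\<^sup>2) = v * (\<Sum>i\<in>I. (a i)\<^sup>2)"
    unfolding Y_def using indep_vars_centered_weighted_sum_square[OF indep I square_int var] by auto
  have "random_variable borel Y"
    unfolding Y_def using meas by measurable
  moreover have "expectation Y = 0"
    unfolding Y_def using int by (simp add: Bochner_Integration.integral_sum prob_space)
  ultimately have "prob {\<omega> \<in> space M. \<epsilon> \<le> \<bar>Y \<omega>\<bar>} \<le> v * (\<Sum>i\<in>I. (a i)\<^sup>2) / \<epsilon>\<^sup>2"
    using Chebyshev_inequality[OF _ Y_square(1) eps] Y_square(2) by simp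
  moreover have "Y \<omega> = (\<Sum>i\<in>I. a i * X i \<omega>) - (\<Sum>i\<in>I. a i * expectation (X i))" for \<omega>
    unfolding Y_def by (simp add: algebra_simps sum_subtractf)
  ultimately show ?thesis by simp
qed

lemma (in prob_space) standard_exponential_moments:
  assumes "distributed M lborel X (exponential_density 1)"
  shows "integrable M (\<lambda>\<omega>. (X \<omega>)\<^sup>2)" "expectation X = 1" "variance X = 1"
  using erlang_ith_moment_integrable[OF _ assms, of 2] exponential_distributed_expectation[OF _ assms]
    exponential_distributed_variance[OF _ assms]
  by simp_all

lemma (in prob_space) conv_in_prob_indep_weighted_sum:
  fixes X :: "nat \<Rightarrow> 'a \<Rightarrow> real" and a :: "nat \<Rightarrow> nat \<Rightarrow> real" and I :: "nat \<Rightarrow> nat set"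
  assumes indep: "indep_vars (\<lambda>_. borel) X J"
    and square_int: "\<And>i. i \<in> J \<Longrightarrow> integrable M (\<lambda>\<omega>. (X i \<omega>)\<^sup>2)"
    and mean: "\<And>i. i \<in> J \<Longrightarrow> expectation (X i) = \<mu>"
    and var: "\<And>i. i \<in> J \<Longrightarrow> variance (X i) = v"
    and I: "\<And>k. finite (I k)" "\<And>k. I k \<subseteq> J"
    and sum_lim: "(\<lambda>k. \<Sum>i\<in>I k. a k i) \<longlonglongrightarrow> c"
    and square_sum_lim: "(\<lambda>k. \<Sum>i\<in>I k. (a k i)\<^sup>2) \<longlonglongrightarrow> 0"
  shows "conv_in_prob M (\<lambda>k \<omega>. \<Sum>i\<in>I k. a k i * X i \<omega>) (\<mu> * c)"
  unfolding conv_in_prob_def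
proof (intro allI impI)
  fix \<epsilon> :: real assume eps: "\<epsilon> > 0"
  define S where "S k \<omega> = (\<Sum>i\<in>I k. a k i * X i \<omega>)" for k \<omega>
  have meas: "X i \<in> borel_measurable M" if "i \<in> J" for i
    using indep that by (auto simp: indep_vars_def)
  have "(\<lambda>k. \<mu> * (\<Sum>i\<in>I k. a k i)) \<longlonglongrightarrow> \<mu> * c"
    by (intro tendsto_mult tendsto_const sum_lim)
  then have close: "\<forall>\<^sub>F k in sequentially. \<bar>\<mu> * (\<Sum>i\<in>I k. a k i) - \<mu> * c\<bar> < \<epsilon> / 2"
    using eps by (auto dest!: tendstoD[where e = "\<epsilon> / 2"] simp: dist_real_def)
  have bound: "\<forall>\<^sub>F k in sequentially.
      measure M {\<omega> \<in> space M. \<epsilon> < \<bar>S k \<omega> - \<mu> * c\<bar>} \<le> v * (\<Sum>i\<in>I k. (a k i)\<^sup>2) / (\<epsilon> / 2)\<^sup>2"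
    using close
  proof eventually_elim
    case (elim k)
    have "(\<Sum>i\<in>I k. a k i * expectation (X i)) = \<mu> * (\<Sum>i\<in>I k. a k i)"
      using mean I(2) by (auto simp: sum_distrib_left mult.commute subset_iff intro!: sum.cong)
    then have sub: "{\<omega> \<in> space M. \<epsilon> < \<bar>S k \<omega> - \<mu> * c\<bar>} \<subseteq>
        {\<omega> \<in> space M. \<epsilon> / 2 \<le> \<bar>S k \<omega> - (\<Sum>i\<in>I k. a k i * expectation (X i))\<bar>}"
      using elim by (auto simp: abs_real_def split: if_splits)
    have "S k \<in> borel_measurable M"
      unfolding S_def using meas I(2) by (auto intro!: borel_measurable_sum borel_measurable_times)
    then have "{\<omega> \<in> space M. \<epsilon> / 2 \<le> \<bar>S k \<omega> - (\<Sum>i\<in>I k. a k i * expectation (X i))\<bar>} \<in> events"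
      by measurable
    from finite_measure_mono[OF sub this]
    have "prob {\<omega> \<in> space M. \<epsilon> < \<bar>S k \<omega> - \<mu> * c\<bar>} \<le>
        prob {\<omega> \<in> space M. \<epsilon> / 2 \<le> \<bar>S k \<omega> - (\<Sum>i\<in>I k. a k i * expectation (X i))\<bar>}" .
    also have "\<dots> \<le> v * (\<Sum>i\<in>I k. (a k i)\<^sup>2) / (\<epsilon> / 2)\<^sup>2"
      unfolding S_def using I eps
      by (intro indep_vars_Chebyshev_weighted_sum indep_vars_subset[OF indep] square_int var) auto
    finally show ?case .
  qed
  have "(\<lambda>k. v * (\<Sum>i\<in>I k. (a k i)\<^sup>2) / (\<epsilon> / 2)\<^sup>2) \<longlonglongrightarrow> v * 0 / (\<epsilon> / 2)\<^sup>2"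
    by (intro tendsto_divide tendsto_mult tendsto_const square_sum_lim) (use eps in simp)
  then show "(\<lambda>k. prob {\<omega> \<in> space M. \<epsilon> < \<bar>S k \<omega> - \<mu> * c\<bar>}) \<longlonglongrightarrow> 0"
    by (intro tendsto_sandwich[OF _ bound tendsto_const]) simp_all
qed

section \<open>Riemann sums on the grid u j k\<close>

lemma powr_Suc_diff_ge:
  assumes "0 < e" "e \<le> 1" "(x::real) \<ge> 0"
  shows "e * (x + 1) powr (e - 1) \<le> (x + 1) powr e - x powr e"
proof (cases "x = 0")
  case True
  then show ?thesis using assms by simp
next
  case False
  then have x: "x > 0" using assms by simp
  have "\<exists>z. x < z \<and> z < x + 1 \<and> (x + 1) powr e - x powr e = (x + 1 - x) * (e * z powr (e - 1))"
    by (rule MVT2) (use x in \<open>auto intro!: has_real_derivative_powr\<close>)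
  then obtain z where z: "x < z" "z < x + 1" "(x + 1) powr e - x powr e = e * z powr (e - 1)"
    by auto
  have "(x + 1) powr (e - 1) \<le> z powr (e - 1)"
    using z x assms by (intro powr_mono2') auto
  then show ?thesis using z assms by (simp add: mult_left_mono)
qed

lemma sum_powr_le:
  assumes "0 < e" "e \<le> 1"
  shows "(\<Sum>m=1..n. real m powr (e - 1)) \<le> real n powr e / e"
proof (induction n)
  case 0
  then show ?case by simp
next
  case (Suc n)
  have "(\<Sum>m=1..Suc n. real m powr (e - 1)) = (\<Sum>m=1..n. real m powr (e - 1)) + (real n + 1) powr (e - 1)"
    by (simp add: add.commute)
  also have "\<dots> \<le> real n powr e / e + ((real n + 1) powr e - real n powr e) / e"
    using Suc.IH powr_Suc_diff_ge[OF assms, of "real n"] assms by (simp add: field_simps)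
  also have "\<dots> = real (Suc n) powr e / e"
    by (simp add: add_divide_distrib[symmetric] add.commute)
  finally show ?case .
qed

lemma right_endpoint_rule_error:
  fixes F f f' :: "real \<Rightarrow> real"
  assumes xy: "x < y"
    and F': "\<And>s. x \<le> s \<Longrightarrow> s \<le> y \<Longrightarrow> (F has_real_derivative f s) (at s)"
    and f': "\<And>s. x \<le> s \<Longrightarrow> s \<le> y \<Longrightarrow> (f has_real_derivative f' s) (at s)"
    and B: "\<And>s. x \<le> s \<Longrightarrow> s \<le> y \<Longrightarrow> \<bar>f' s\<bar> \<le> B"
  shows "\<bar>F y - F x - (y - x) * f y\<bar> \<le> B * (y - x)\<^sup>2"
proof -
  have f_close: "\<bar>f s - f y\<bar> \<le> B * (y - x)" if s: "x \<le> s" "s \<le> y" for s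
  proof (cases "s = y")
    case True
    then show ?thesis using B[of x] xy by simp
  next
    case False
    then obtain z where z: "s < z" "z < y" "f y - f s = (y - s) * f' z"
      using MVT2[of s y f f'] f' s by force
    have "\<bar>f y - f s\<bar> = (y - s) * \<bar>f' z\<bar>" using z by (simp add: abs_mult)
    also have "\<dots> \<le> (y - x) * B"
      using B[of z] z s by (intro mult_mono) auto
    finally show ?thesis by (simp add: abs_minus_commute mult.commute)
  qed
  obtain z where z: "x < z" "z < y"
      "F y - y * f y - (F x - x * f y) = (y - x) * (f z - f y)"
    using MVT2[of x y "\<lambda>s. F s - s * f y" "\<lambda>s. f s - f y"] xy
    by (force intro!: derivative_eq_intros F')
  then have "F y - F x - (y - x) * f y = (y - x) * (f z - f y)"
    by (simp add: algebra_simps)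
  then have "\<bar>F y - F x - (y - x) * f y\<bar> = (y - x) * \<bar>f z - f y\<bar>"
    using xy by (simp add: abs_mult)
  also have "\<dots> \<le> (y - x) * (B * (y - x))"
    using f_close[of z] z xy by (intro mult_left_mono) auto
  finally show ?thesis by (simp add: power2_eq_square mult_ac)
qed

lemma u_Suc: "u (Suc j) k = u j k + 1 / (real k + 1)"
  unfolding u_def by (simp add: add_divide_distrib)

lemma u_in_unit_interval: "1 \<le> j \<Longrightarrow> j \<le> k \<Longrightarrow> u j k \<in> {0<..<1}"
  unfolding u_def by (auto simp: field_simps)

lemma grid_step_error:
  fixes F f f' :: "real \<Rightarrow> real"
  assumes F': "\<And>s. 0 < s \<Longrightarrow> s < 1 \<Longrightarrow> (F has_real_derivative f s) (at s)"
    and f': "\<And>s. 0 < s \<Longrightarrow> s < 1 \<Longrightarrow> (f has_real_derivative f' s) (at s)"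
    and B: "\<And>s. 0 < s \<Longrightarrow> s < 1 \<Longrightarrow> \<bar>f' s\<bar> \<le> M * s powr (a - 1)"
    and a: "a \<le> 1" and M: "0 \<le> M" and j: "1 \<le> j" "j < k"
  shows "\<bar>F (u (Suc j) k) - F (u j k) - 1 / (real k + 1) * f (u (Suc j) k)\<bar>
           \<le> M * (1 / (real k + 1)) powr (a + 1) * real j powr (a - 1)"
proof -
  define h where "h = 1 / (real k + 1)"
  have h: "0 < h" and uj: "u j k = real j * h" and uSj: "u (Suc j) k = u j k + h"
    using u_Suc unfolding h_def u_def by auto
  have range: "0 < s \<and> s < 1" if "u j k \<le> s" "s \<le> u (Suc j) k" for s
    using that u_in_unit_interval[of j k] u_in_unit_interval[of "Suc j" k] j by auto
  have "\<bar>F (u (Suc j) k) - F (u j k) - (u (Suc j) k - u j k) * f (u (Suc j) k)\<bar>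
      \<le> (M * (real j * h) powr (a - 1)) * (u (Suc j) k - u j k)\<^sup>2"
  proof (rule right_endpoint_rule_error)
    fix s assume s: "u j k \<le> s" "s \<le> u (Suc j) k"
    then show "(F has_real_derivative f s) (at s)" "(f has_real_derivative f' s) (at s)"
      using range F' f' by auto
    have "s powr (a - 1) \<le> (real j * h) powr (a - 1)"
      using s range[OF s] uj a j h by (intro powr_mono2') auto
    then show "\<bar>f' s\<bar> \<le> M * (real j * h) powr (a - 1)"
      using B range[OF s] M by (meson mult_left_mono order_trans)
  qed (use uSj h in simp)
  also have "(M * (real j * h) powr (a - 1)) * (u (Suc j) k - u j k)\<^sup>2 = M * h powr (a + 1) * real j powr (a - 1)"
    using h j by (simp add: uSj powr_mult powr_add power2_eq_square powr_diff field_simps)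
  finally show ?thesis by (simp add: uSj h_def)
qed

lemma grid_Riemann_sum_error:
  fixes F f f' :: "real \<Rightarrow> real"
  assumes F': "\<And>s. 0 < s \<Longrightarrow> s < 1 \<Longrightarrow> (F has_real_derivative f s) (at s)"
    and f': "\<And>s. 0 < s \<Longrightarrow> s < 1 \<Longrightarrow> (f has_real_derivative f' s) (at s)"
    and B: "\<And>s. 0 < s \<Longrightarrow> s < 1 \<Longrightarrow> \<bar>f' s\<bar> \<le> M * s powr (a - 1)"
    and a: "-1 < a" "a \<le> 1" and M: "0 \<le> M" and n: "1 \<le> n" "n \<le> k"
  shows "\<bar>(\<Sum>j=2..n. 1 / (real k + 1) * f (u j k)) - (F (u n k) - F (u 1 k))\<bar>
          \<le> M * (2 / (a + 1)) * (1 / (real k + 1)) powr ((a + 1) / 2)"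
proof -
  define h where "h = 1 / (real k + 1)"
  define e where "e = (a + 1) / 2"
  have h: "0 < h" "h \<le> 1" unfolding h_def by auto
  have e: "0 < e" "e \<le> 1" "a \<le> e" using a unfolding e_def by auto
  have "(\<Sum>j=2..n. h * f (u j k)) = (\<Sum>j=1..<n. h * f (u (Suc j) k))"
    by (subst sum.shift_bounds_Suc_ivl[symmetric]) (simp add: atLeastLessThanSuc_atLeastAtMost numeral_2_eq_2)
  moreover have "(\<Sum>j=1..<n. F (u (Suc j) k) - F (u j k)) = F (u n k) - F (u 1 k)"
    by (rule sum_Suc_diff') (use n in simp)
  ultimately have "\<bar>(\<Sum>j=2..n. h * f (u j k)) - (F (u n k) - F (u 1 k))\<bar>
      = \<bar>\<Sum>j=1..<n. h * f (u (Suc j) k) - (F (u (Suc j) k) - F (u j k))\<bar>"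
    by (simp add: sum_subtractf)
  also have "\<dots> \<le> (\<Sum>j=1..<n. \<bar>F (u (Suc j) k) - F (u j k) - h * f (u (Suc j) k)\<bar>)"
    by (rule order_trans[OF sum_abs]) (simp add: abs_minus_commute algebra_simps)
  also have "\<dots> \<le> (\<Sum>j=1..<n. M * h powr (a + 1) * real j powr (a - 1))"
    unfolding h_def using n by (intro sum_mono grid_step_error[OF F' f' B a(2) M]) auto
  also have "\<dots> \<le> M * h powr (a + 1) * (\<Sum>j=1..n-1. real j powr (e - 1))"
  proof -
    have "{1..<n} = {1..n-1}" using n by auto
    show ?thesis
      unfolding sum_distrib_left[symmetric] \<open>{1..<n} = {1..n-1}\<close>
      using M e by (intro mult_left_mono sum_mono powr_mono) auto
  qed
  also have "\<dots> \<le> M * h powr (a + 1) * ((1 / h) powr e / e)"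
  proof -
    have "real (n - 1) powr e / e \<le> (1 / h) powr e / e"
      using n e h unfolding h_def by (intro divide_right_mono powr_mono2) auto
    then show ?thesis
      using sum_powr_le[OF e(1,2), of "n - 1"] M by (intro mult_left_mono) auto
  qed
  also have "\<dots> = M * (2 / (a + 1)) * h powr e"
  proof -
    have "h powr (a + 1) = h powr e * h powr e" by (simp add: e_def flip: powr_add)
    moreover have "(1 / h) powr e = 1 / h powr e" using h by (simp add: powr_divide)
    ultimately show ?thesis using h e by (simp add: e_def)
  qed
  finally show ?thesis by (simp add: h_def e_def)
qed

lemma bounded_image_abs_le:
  fixes f :: "'b \<Rightarrow> real"
  assumes "bounded (f ` S)"
  obtains B where "0 \<le> B" "\<And>x. x \<in> S \<Longrightarrow> \<bar>f x\<bar> \<le> B"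
  using assms unfolding bounded_pos by (auto intro: that[of _] less_imp_le)

lemma one_over_Suc_tendsto_zero: "(\<lambda>k. 1 / (real k + 1)) \<longlonglongrightarrow> 0"
  using LIMSEQ_inverse_real_of_nat by (simp add: inverse_eq_divide add.commute)

lemma one_over_Suc_powr_tendsto_zero: "r > 0 \<Longrightarrow> (\<lambda>k. (1 / (real k + 1)) powr r) \<longlonglongrightarrow> 0"
  by (rule tendsto_zero_powrI[OF one_over_Suc_tendsto_zero tendsto_const]) auto

lemma grid_weight_sum_le:
  assumes b: "0 < b"
  shows "(\<Sum>i=1..k. u i k powr b / real i) \<le> 1 + 1 / b"
proof -
  define h where "h = 1 / (real k + 1)"
  have h: "0 < h" "h * real k \<le> 1" unfolding h_def by (auto simp: field_simps)
  have ui: "u i k = real i * h" for i by (simp add: u_def h_def)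
  show ?thesis
  proof (cases "b \<ge> 1")
    case True
    have "(\<Sum>i=1..k. u i k powr b / real i) \<le> (\<Sum>i=1..k. h)"
    proof (rule sum_mono)
      fix i assume i: "i \<in> {1..k}"
      have "u i k powr b \<le> u i k" using u_in_unit_interval[of i k] i True by (intro powr_le_one_le) auto
      then show "u i k powr b / real i \<le> h" using i by (simp add: ui divide_right_mono field_simps)
    qed
    also have "\<dots> \<le> 1" using h by (simp add: mult.commute)
    finally show ?thesis using b by (simp add: add_increasing2)
  next
    case False
    have "(\<Sum>i=1..k. u i k powr b / real i) = h powr b * (\<Sum>i=1..k. real i powr (b - 1))"
      unfolding sum_distrib_left using h by (intro sum.cong) (auto simp: ui powr_mult powr_diff)
    also have "\<dots> \<le> h powr b * (real k powr b / b)"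
      using sum_powr_le[of b k] b False by (intro mult_left_mono) auto
    also have "\<dots> = (h * real k) powr b / b" using h by (simp add: powr_mult)
    also have "\<dots> \<le> 1 / b" using h b by (intro divide_right_mono powr_le1) auto
    finally show ?thesis by simp
  qed
qed

section \<open>The inner and outer sums\<close>

locale smooth_kernel =
  fixes K K' K'' :: "real \<Rightarrow> real" and p b :: real
  assumes p: "0 < p" "p < 1" and b: "0 < b"
    and K_integrable: "K absolutely_integrable_on {0..1}"
    and K_deriv: "\<And>x. x \<in> {0<..<1} \<Longrightarrow> (K has_real_derivative K' x) (at x)"
    and K'_deriv: "\<And>x. x \<in> {0<..<1} \<Longrightarrow> (K' has_real_derivative K'' x) (at x)"
    and K_bounded: "bounded (K ` {0<..<1})"
    and K'_bounded: "bounded (K' ` {0<..<1})"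
    and K''_bounded: "bounded (K'' ` {0<..<1})"
begin

definition dgK :: "real \<Rightarrow> real" where "dgK x = K x + x * K' x"

definition ddgK :: "real \<Rightarrow> real" where "ddgK x = 2 * K' x + x * K'' x"

lemma gK_has_derivative: "x \<in> {0<..<1} \<Longrightarrow> (gK K has_real_derivative dgK x) (at x)"
  unfolding gK_def[abs_def] dgK_def
  by (auto intro!: derivative_eq_intros K_deriv simp: algebra_simps)

lemma dgK_has_derivative: "x \<in> {0<..<1} \<Longrightarrow> (dgK has_real_derivative ddgK x) (at x)"
  unfolding dgK_def[abs_def] ddgK_def
  by (auto intro!: derivative_eq_intros K_deriv K'_deriv simp: algebra_simps)

lemma dgK_bound:
  obtains G where "0 \<le> G" "\<And>x. x \<in> {0<..<1} \<Longrightarrow> \<bar>dgK x\<bar> \<le> G"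
proof -
  obtain B0 B1 where B0: "0 \<le> B0" "\<And>x. x \<in> {0<..<1} \<Longrightarrow> \<bar>K x\<bar> \<le> B0"
    and B1: "0 \<le> B1" "\<And>x. x \<in> {0<..<1} \<Longrightarrow> \<bar>K' x\<bar> \<le> B1"
    using bounded_image_abs_le[OF K_bounded] bounded_image_abs_le[OF K'_bounded] by metis
  have "\<bar>dgK x\<bar> \<le> B0 + B1" if x: "x \<in> {0<..<1}" for x
  proof -
    have "\<bar>x * K' x\<bar> \<le> 1 * B1" unfolding abs_mult using x B1 by (intro mult_mono) auto
    then show ?thesis unfolding dgK_def using B0(2)[OF x] by simp
  qed
  then show ?thesis using B0 B1 that[of "B0 + B1"] by auto
qed

lemma ddgK_bound:
  obtains G where "0 \<le> G" "\<And>x. x \<in> {0<..<1} \<Longrightarrow> \<bar>ddgK x\<bar> \<le> G"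
proof -
  obtain B1 B2 where B1: "0 \<le> B1" "\<And>x. x \<in> {0<..<1} \<Longrightarrow> \<bar>K' x\<bar> \<le> B1"
    and B2: "0 \<le> B2" "\<And>x. x \<in> {0<..<1} \<Longrightarrow> \<bar>K'' x\<bar> \<le> B2"
    using bounded_image_abs_le[OF K'_bounded] bounded_image_abs_le[OF K''_bounded] by metis
  have "\<bar>ddgK x\<bar> \<le> 2 * B1 + B2" if x: "x \<in> {0<..<1}" for x
  proof -
    have "\<bar>x * K'' x\<bar> \<le> 1 * B2" unfolding abs_mult using x B2 by (intro mult_mono) auto
    then show ?thesis unfolding ddgK_def using B1(2)[OF x] by simp
  qed
  then show ?thesis using B1 B2 that[of "2 * B1 + B2"] by auto
qed

lemma powr_p_in_unit_interval: "t \<in> {0<..<1} \<Longrightarrow> t powr p \<in> {0<..<1}"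
  using p powr_less_mono2[of p t 1] by auto

definition Phi :: "real \<Rightarrow> real" where "Phi t = gK K (t powr p) / p"

definition phi :: "real \<Rightarrow> real" where "phi t = t powr (p - 1) * dgK (t powr p)"

definition dphi :: "real \<Rightarrow> real" where
  "dphi t = (p - 1) * t powr (p - 2) * dgK (t powr p) + p * t powr (2 * p - 2) * ddgK (t powr p)"

lemma Phi_has_derivative: "t \<in> {0<..<1} \<Longrightarrow> (Phi has_real_derivative phi t) (at t)"
  unfolding Phi_def[abs_def] phi_def using p
  by (auto intro!: derivative_eq_intros DERIV_chain2[OF gK_has_derivative] powr_p_in_unit_interval)

lemma phi_has_derivative: "t \<in> {0<..<1} \<Longrightarrow> (phi has_real_derivative dphi t) (at t)"
proof -
  assume t: "t \<in> {0<..<1}"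
  have "t powr (p - 1) * (ddgK (t powr p) * (p * t powr (p - 1))) = p * t powr (2 * p - 2) * ddgK (t powr p)"
    using t by (simp add: mult_ac flip: powr_add)
  then show ?thesis
    unfolding phi_def[abs_def] dphi_def using t p
    by (auto intro!: derivative_eq_intros DERIV_chain2[OF dgK_has_derivative] powr_p_in_unit_interval
        simp: diff_diff_eq)
qed

lemma phi_bound:
  obtains G where "0 \<le> G" "\<And>t. t \<in> {0<..<1} \<Longrightarrow> \<bar>phi t\<bar> \<le> G * t powr (p - 1)"
proof -
  obtain G where G: "0 \<le> G" "\<And>x. x \<in> {0<..<1} \<Longrightarrow> \<bar>dgK x\<bar> \<le> G" using dgK_bound by blast
  show ?thesis
  proof (rule that[OF G(1)])
    fix t :: real assume "t \<in> {0<..<1}"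
    then show "\<bar>phi t\<bar> \<le> G * t powr (p - 1)"
      unfolding phi_def abs_mult using G(2)[OF powr_p_in_unit_interval]
      by (simp add: mult.commute mult_left_mono)
  qed
qed

lemma dphi_bound:
  obtains M where "0 \<le> M" "\<And>t. t \<in> {0<..<1} \<Longrightarrow> \<bar>dphi t\<bar> \<le> M * t powr (p - 2)"
proof -
  obtain G where G: "0 \<le> G" "\<And>x. x \<in> {0<..<1} \<Longrightarrow> \<bar>dgK x\<bar> \<le> G" using dgK_bound by blast
  obtain G2 where G2: "0 \<le> G2" "\<And>x. x \<in> {0<..<1} \<Longrightarrow> \<bar>ddgK x\<bar> \<le> G2" using ddgK_bound by blast
  show ?thesis
  proof (rule that[of "(1 - p) * G + p * G2"])
    fix t :: real assume t: "t \<in> {0<..<1}"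
    have tp: "t powr p \<in> {0<..<1}" by (rule powr_p_in_unit_interval[OF t])
    have "\<bar>(p - 1) * t powr (p - 2) * dgK (t powr p)\<bar> \<le> (1 - p) * G * t powr (p - 2)"
      unfolding abs_mult using G(2)[OF tp] t p by (simp add: mult_ac mult_left_mono)
    moreover have "\<bar>p * t powr (2 * p - 2) * ddgK (t powr p)\<bar> \<le> p * G2 * t powr (p - 2)"
    proof -
      have "t powr (2 * p - 2) \<le> t powr (p - 2)" using t p by (intro powr_mono') auto
      then show ?thesis
        unfolding abs_mult using G2 tp p by (simp add: mult_ac mult_mono)
    qed
    ultimately show "\<bar>dphi t\<bar> \<le> ((1 - p) * G + p * G2) * t powr (p - 2)"
      unfolding dphi_def by (simp add: algebra_simps)
  qed (use G G2 p in auto)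
qed

lemma Phi_bound:
  obtains B where "0 \<le> B" "\<And>t. t \<in> {0<..<1} \<Longrightarrow> \<bar>Phi t\<bar> \<le> B * t powr p"
proof -
  obtain B where B: "0 \<le> B" "\<And>x. x \<in> {0<..<1} \<Longrightarrow> \<bar>K x\<bar> \<le> B"
    using bounded_image_abs_le[OF K_bounded] by blast
  show ?thesis
  proof (rule that[of "B / p"])
    fix t :: real assume "t \<in> {0<..<1}"
    then show "\<bar>Phi t\<bar> \<le> B / p * t powr p"
      unfolding Phi_def gK_def using B(2)[OF powr_p_in_unit_interval] p
      by (simp add: abs_mult field_simps mult_left_mono)
  qed (use B p in auto)
qed

definition inner_sum :: "nat \<Rightarrow> nat \<Rightarrow> real" where
  "inner_sum k i = (\<Sum>j=2..i. u j k powr (p - 1) * deriv (gK K) (u j k powr p))"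

lemma inner_sum_eq: "i \<le> k \<Longrightarrow> inner_sum k i = (\<Sum>j=2..i. phi (u j k))"
  unfolding inner_sum_def phi_def
  using DERIV_imp_deriv[OF gK_has_derivative[OF powr_p_in_unit_interval[OF u_in_unit_interval]]]
  by (intro sum.cong) auto

lemma inner_sum_Riemann_error:
  obtains C where "0 \<le> C" "\<And>k i. 1 \<le> i \<Longrightarrow> i \<le> k \<Longrightarrow>
    \<bar>1 / (real k + 1) * inner_sum k i - (Phi (u i k) - Phi (u 1 k))\<bar> \<le> C * (1 / (real k + 1)) powr (p / 2)"
proof -
  obtain M where M: "0 \<le> M" "\<And>t. t \<in> {0<..<1} \<Longrightarrow> \<bar>dphi t\<bar> \<le> M * t powr (p - 2)"
    using dphi_bound by blast
  show ?thesis
  proof (rule that[of "M * (2 / p)"])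
    fix k i :: nat assume i: "1 \<le> i" "i \<le> k"
    have "\<bar>(\<Sum>j=2..i. 1 / (real k + 1) * phi (u j k)) - (Phi (u i k) - Phi (u 1 k))\<bar>
        \<le> M * (2 / ((p - 1) + 1)) * (1 / (real k + 1)) powr (((p - 1) + 1) / 2)"
      using p M Phi_has_derivative phi_has_derivative i
      by (intro grid_Riemann_sum_error[of Phi phi dphi]) auto
    then show "\<bar>1 / (real k + 1) * inner_sum k i - (Phi (u i k) - Phi (u 1 k))\<bar>
        \<le> M * (2 / p) * (1 / (real k + 1)) powr (p / 2)"
      using inner_sum_eq[OF i(2)] by (simp add: sum_distrib_left)
  qed (use M p in auto)
qed

lemma inner_sum_abs_le:
  obtains G where "\<And>k i. i \<le> k \<Longrightarrow>
    \<bar>inner_sum k i\<bar> \<le> G * (1 / (real k + 1)) powr (p - 1) * real i powr p"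
proof -
  obtain G where G: "0 \<le> G" "\<And>t. t \<in> {0<..<1} \<Longrightarrow> \<bar>phi t\<bar> \<le> G * t powr (p - 1)"
    using phi_bound by blast
  show ?thesis
  proof (rule that[of "G / p"])
    fix k i :: nat assume i: "i \<le> k"
    define h where "h = 1 / (real k + 1)"
    have "\<bar>inner_sum k i\<bar> \<le> (\<Sum>j=2..i. \<bar>phi (u j k)\<bar>)"
      using i by (simp add: inner_sum_eq sum_abs)
    also have "\<dots> \<le> (\<Sum>j=1..i. G * h powr (p - 1) * real j powr (p - 1))"
    proof (rule order_trans[OF sum_mono sum_mono2])
      fix j assume j: "j \<in> {2..i}"
      have "\<bar>phi (u j k)\<bar> \<le> G * u j k powr (p - 1)"
        using G(2) u_in_unit_interval[of j k] j i by auto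
      then show "\<bar>phi (u j k)\<bar> \<le> G * h powr (p - 1) * real j powr (p - 1)"
        by (simp add: u_def h_def powr_divide)
    qed (use G in auto)
    also have "\<dots> \<le> G * h powr (p - 1) * (real i powr p / p)"
      unfolding sum_distrib_left[symmetric] using sum_powr_le[of p i] p G
      by (intro mult_left_mono) auto
    finally show "\<bar>inner_sum k i\<bar> \<le> G / p * (1 / (real k + 1)) powr (p - 1) * real i powr p"
      by (simp add: h_def)
  qed
qed

definition psi :: "real \<Rightarrow> real" where "psi t = t powr (b / p) * K t"

definition Psi :: "real \<Rightarrow> real" where "Psi t = integral {0..t} psi"

lemma psi_integrable: "psi integrable_on {0..1}"
proof -
  have meas: "(\<lambda>t. t powr (b / p)) \<in> borel_measurable (lebesgue_on {0..1})"
    using b p by (intro continuous_imp_measurable_on_sets_lebesgue continuous_on_powr' continuous_intros) auto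
  have bdd: "bounded ((\<lambda>t. t powr (b / p)) ` {0..1})"
    unfolding bounded_iff using b p by (intro exI[of _ 1]) (auto intro!: powr_le1)
  have "psi absolutely_integrable_on {0..1}"
    unfolding psi_def[abs_def]
    by (rule absolutely_integrable_bounded_measurable_product_real[OF meas _ bdd K_integrable]) auto
  then show ?thesis using absolutely_integrable_on_def by blast
qed

lemma Psi_continuous: "continuous_on {0..1} Psi"
  unfolding Psi_def[abs_def] by (rule indefinite_integral_continuous_1[OF psi_integrable])

lemma Psi_has_derivative: "t \<in> {0<..<1} \<Longrightarrow> (Psi has_real_derivative psi t) (at t)"
proof -
  assume t: "t \<in> {0<..<1}"
  have "isCont psi t"
    unfolding psi_def[abs_def] using t
    by (intro isCont_mult DERIV_isCont[OF K_deriv[OF t]] DERIV_isCont[OF has_real_derivative_powr]) auto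
  then have "continuous (at t within ({0..1} - {})) psi"
    by (rule continuous_at_imp_continuous_within)
  from integral_has_vector_derivative_continuous_at[OF psi_integrable _ _ this]
  have "(Psi has_vector_derivative psi t) (at t within {0..1})"
    unfolding Psi_def[abs_def] using t by simp
  moreover have "at t within {0..1} = at t" using t by (intro at_within_Icc_at) auto
  ultimately show ?thesis by (simp add: has_real_derivative_iff_has_vector_derivative)
qed

definition Theta :: "real \<Rightarrow> real" where "Theta s = Psi (s powr p) / p\<^sup>2"

definition theta :: "real \<Rightarrow> real" where "theta s = s powr (b - 1) * Phi s"

definition dtheta :: "real \<Rightarrow> real" where
  "dtheta s = (b - 1) * s powr (b - 2) * Phi s + s powr (b - 1) * phi s"

lemma Theta_has_derivative: "s \<in> {0<..<1} \<Longrightarrow> (Theta has_real_derivative theta s) (at s)"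
proof -
  assume s: "s \<in> {0<..<1}"
  have "((\<lambda>t. t powr p) has_real_derivative p * s powr (p - 1)) (at s)"
    using s by (intro has_real_derivative_powr) auto
  from DERIV_chain2[OF Psi_has_derivative[OF powr_p_in_unit_interval[OF s]] this]
  have "(Theta has_real_derivative psi (s powr p) * (p * s powr (p - 1)) / p\<^sup>2) (at s)"
    unfolding Theta_def[abs_def] by (rule DERIV_cdivide)
  moreover have "psi (s powr p) * (p * s powr (p - 1)) / p\<^sup>2 = theta s"
  proof -
    have "(s powr p) powr (b / p) = s powr b" using p by (simp add: powr_powr)
    moreover have "s powr b * s powr (p - 1) = s powr (b - 1) * s powr p"
      by (simp only: powr_add[symmetric]) (simp add: algebra_simps)
    ultimately show ?thesis
      unfolding psi_def theta_def Phi_def gK_def using p by (simp add: power2_eq_square field_simps)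
  qed
  ultimately show ?thesis by simp
qed

lemma theta_has_derivative: "s \<in> {0<..<1} \<Longrightarrow> (theta has_real_derivative dtheta s) (at s)"
  unfolding theta_def[abs_def] dtheta_def
  by (auto intro!: derivative_eq_intros Phi_has_derivative simp: diff_diff_eq)

lemma dtheta_bound:
  obtains M where "0 \<le> M" "\<And>s. s \<in> {0<..<1} \<Longrightarrow> \<bar>dtheta s\<bar> \<le> M * s powr (b + p - 2)"
proof -
  obtain G where G: "0 \<le> G" "\<And>t. t \<in> {0<..<1} \<Longrightarrow> \<bar>phi t\<bar> \<le> G * t powr (p - 1)"
    using phi_bound by blast
  obtain B where B: "0 \<le> B" "\<And>t. t \<in> {0<..<1} \<Longrightarrow> \<bar>Phi t\<bar> \<le> B * t powr p"
    using Phi_bound by blast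
  show ?thesis
  proof (rule that[of "\<bar>b - 1\<bar> * B + G"])
    fix s :: real assume s: "s \<in> {0<..<1}"
    have "\<bar>(b - 1) * s powr (b - 2) * Phi s\<bar> \<le> \<bar>b - 1\<bar> * (s powr (b - 2) * (B * s powr p))"
      using B(2)[OF s] s by (simp add: abs_mult mult.assoc mult_left_mono)
    also have "\<dots> = \<bar>b - 1\<bar> * B * s powr (b + p - 2)"
      using s by (simp add: algebra_simps flip: powr_add)
    finally have Phi_part: "\<bar>(b - 1) * s powr (b - 2) * Phi s\<bar> \<le> \<bar>b - 1\<bar> * B * s powr (b + p - 2)" .
    have "\<bar>s powr (b - 1) * phi s\<bar> \<le> s powr (b - 1) * (G * s powr (p - 1))"
      using G(2)[OF s] s by (simp add: abs_mult mult_left_mono)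
    also have "\<dots> = G * s powr (b + p - 2)"
      using s by (simp add: algebra_simps flip: powr_add)
    finally show "\<bar>dtheta s\<bar> \<le> (\<bar>b - 1\<bar> * B + G) * s powr (b + p - 2)"
      unfolding dtheta_def distrib_right
      using Phi_part abs_triangle_ineq[of "(b - 1) * s powr (b - 2) * Phi s" "s powr (b - 1) * phi s"] by linarith
  qed (use G B in auto)
qed

lemma outer_sum_Riemann_error:
  obtains e C where "0 < e" "\<And>k. 1 \<le> k \<Longrightarrow>
    \<bar>(\<Sum>i=2..k. u i k powr b / real i * Phi (u i k)) - (Theta (u k k) - Theta (u 1 k))\<bar>
      \<le> C * (1 / (real k + 1)) powr e"
proof -
  obtain M where M: "0 \<le> M" "\<And>s. s \<in> {0<..<1} \<Longrightarrow> \<bar>dtheta s\<bar> \<le> M * s powr (b + p - 2)"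
    using dtheta_bound by blast
  define a where "a = min (b + p - 1) (1 / 2)"
  have a: "-1 < a" "a \<le> 1" "a \<le> b + p - 1" unfolding a_def using p b by auto
  have dtheta_le: "\<bar>dtheta s\<bar> \<le> M * s powr (a - 1)" if s: "0 < s" "s < 1" for s
  proof -
    have "s powr (b + p - 2) \<le> s powr (a - 1)" using s a by (intro powr_mono') auto
    then show ?thesis using M s by (meson greaterThanLessThan_iff mult_left_mono order_trans)
  qed
  show ?thesis
  proof (rule that[of "(a + 1) / 2" "M * (2 / (a + 1))"])
    fix k :: nat assume k: "1 \<le> k"
    have "1 / (real k + 1) * theta (u i k) = u i k powr b / real i * Phi (u i k)" if "i \<in> {2..k}" for i
    proof -
      have "u i k > 0" using u_in_unit_interval[of i k] that by auto
      moreover have "1 / (real k + 1) = u i k / real i" using that by (simp add: u_def)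
      ultimately show ?thesis unfolding theta_def by (simp add: powr_diff field_simps)
    qed
    then have "(\<Sum>i=2..k. 1 / (real k + 1) * theta (u i k)) = (\<Sum>i=2..k. u i k powr b / real i * Phi (u i k))"
      by (rule sum.cong[OF refl])
    with grid_Riemann_sum_error[of Theta theta dtheta M a k k] Theta_has_derivative theta_has_derivative
      dtheta_le a M k
    show "\<bar>(\<Sum>i=2..k. u i k powr b / real i * Phi (u i k)) - (Theta (u k k) - Theta (u 1 k))\<bar>
        \<le> M * (2 / (a + 1)) * (1 / (real k + 1)) powr ((a + 1) / 2)"
      by auto
  qed (use a in auto)
qed

definition coeff :: "nat \<Rightarrow> nat \<Rightarrow> real" where
  "coeff k i = 1 / (real k + 1) * (u i k powr b * ((1 / real i) * inner_sum k i))"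

lemma coeff_abs_le:
  obtains C where "\<And>k i. 1 \<le> i \<Longrightarrow> i \<le> k \<Longrightarrow>
    \<bar>coeff k i\<bar> \<le> C * (1 / (real k + 1)) powr p * real i powr (p - 1)"
proof -
  obtain G where G: "\<And>k i. i \<le> k \<Longrightarrow>
      \<bar>inner_sum k i\<bar> \<le> G * (1 / (real k + 1)) powr (p - 1) * real i powr p"
    using inner_sum_abs_le by blast
  show ?thesis
  proof (rule that)
    fix k i :: nat assume i: "1 \<le> i" "i \<le> k"
    define h where "h = 1 / (real k + 1)"
    have h: "0 < h" unfolding h_def by simp
    have "\<bar>coeff k i\<bar> = h * u i k powr b * ((1 / real i) * \<bar>inner_sum k i\<bar>)"
      unfolding coeff_def h_def by (simp add: abs_mult)
    also have "\<dots> \<le> h * 1 * ((1 / real i) * (G * h powr (p - 1) * real i powr p))"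
      using u_in_unit_interval[OF i] b G[OF i(2)] h unfolding h_def
      by (intro mult_mono mult_left_mono powr_le1) auto
    also have "\<dots> = G * (h * h powr (p - 1)) * (real i powr p / real i)"
      by (simp add: field_simps)
    also have "\<dots> = G * h powr p * real i powr (p - 1)"
      using h i by (simp add: powr_diff)
    finally show "\<bar>coeff k i\<bar> \<le> G * (1 / (real k + 1)) powr p * real i powr (p - 1)"
      by (simp add: h_def)
  qed
qed

lemma coeff_square_sum_le:
  obtains C where "\<And>k. (\<Sum>i=2..k. (coeff k i)\<^sup>2) \<le> C * (1 / (real k + 1)) powr p"
proof -
  obtain C where C: "\<And>k i. 1 \<le> i \<Longrightarrow> i \<le> k \<Longrightarrow>
      \<bar>coeff k i\<bar> \<le> C * (1 / (real k + 1)) powr p * real i powr (p - 1)"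
    using coeff_abs_le by blast
  have "(\<Sum>i=2..k. (coeff k i)\<^sup>2) \<le> C\<^sup>2 / p * (1 / (real k + 1)) powr p" for k
  proof -
    define h where "h = 1 / (real k + 1)"
    have h: "0 < h" "h * real k \<le> 1" unfolding h_def by (auto simp: field_simps)
    have "(\<Sum>i=2..k. (coeff k i)\<^sup>2) \<le> (\<Sum>i=1..k. C\<^sup>2 * (h powr p)\<^sup>2 * real i powr (p - 1))"
    proof (rule order_trans[OF sum_mono sum_mono2])
      fix i assume i: "i \<in> {2..k}"
      have "(coeff k i)\<^sup>2 \<le> (C * h powr p * real i powr (p - 1))\<^sup>2"
        using C[of i k] i unfolding h_def by (intro power2_le_iff_abs_le[THEN iffD2]) auto
      also have "\<dots> = C\<^sup>2 * (h powr p)\<^sup>2 * (real i powr (p - 1) * real i powr (p - 1))"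
        by (simp add: power_mult_distrib power2_eq_square)
      also have "\<dots> \<le> C\<^sup>2 * (h powr p)\<^sup>2 * real i powr (p - 1)"
      proof -
        have "real i powr (p - 1) \<le> 1 powr (p - 1)" using i p by (intro powr_mono2') auto
        then show ?thesis by (intro mult_left_mono mult_left_le_one_le) auto
      qed
      finally show "(coeff k i)\<^sup>2 \<le> C\<^sup>2 * (h powr p)\<^sup>2 * real i powr (p - 1)" .
    qed auto
    also have "\<dots> \<le> C\<^sup>2 * (h powr p)\<^sup>2 * (real k powr p / p)"
      unfolding sum_distrib_left[symmetric] using sum_powr_le[of p k] p by (intro mult_left_mono) auto
    also have "\<dots> = C\<^sup>2 / p * h powr p * (h * real k) powr p"
      using h by (simp add: power2_eq_square powr_mult field_simps)
    also have "\<dots> \<le> C\<^sup>2 / p * h powr p"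
      using h p by (intro mult_left_le powr_le1) auto
    finally show ?thesis by (simp add: h_def)
  qed
  then show ?thesis by (rule that)
qed

lemma coeff_square_sum_tendsto_zero: "(\<lambda>k. \<Sum>i=2..k. (coeff k i)\<^sup>2) \<longlonglongrightarrow> 0"
proof -
  obtain C where C: "\<And>k. (\<Sum>i=2..k. (coeff k i)\<^sup>2) \<le> C * (1 / (real k + 1)) powr p"
    using coeff_square_sum_le by blast
  have upper: "\<forall>\<^sub>F k in sequentially. (\<Sum>i=2..k. (coeff k i)\<^sup>2) \<le> C * (1 / (real k + 1)) powr p"
    using C by (intro always_eventually allI)
  have lower: "\<forall>\<^sub>F k in sequentially. 0 \<le> (\<Sum>i=2..k. (coeff k i)\<^sup>2)"
    by (intro always_eventually allI sum_nonneg) simp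
  have "(\<lambda>k. C * (1 / (real k + 1)) powr p) \<longlonglongrightarrow> 0"
    using p by (intro tendsto_mult_right_zero one_over_Suc_powr_tendsto_zero)
  from tendsto_sandwich[OF lower upper tendsto_const this] show ?thesis .
qed

lemma Theta_grid_endpoints_lim:
  "(\<lambda>k. Theta (u k k) - Theta (u 1 k)) \<longlonglongrightarrow> integral {0..1} psi / p\<^sup>2"
proof -
  have u_powr_le: "u j k powr p \<le> 1" if "j \<le> k + 1" for j k
    using that p by (auto simp: u_def field_simps intro!: powr_le1)
  have "(\<lambda>k. u k k) \<longlonglongrightarrow> 1"
    using LIMSEQ_n_over_Suc_n[where 'a=real] by (simp add: u_def add.commute)
  from tendsto_powr[OF this tendsto_const, of p] have "(\<lambda>k. u k k powr p) \<longlonglongrightarrow> 1"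
    by simp
  then have "(\<lambda>k. Psi (u k k powr p)) \<longlonglongrightarrow> Psi 1"
    by (rule continuous_on_tendsto_compose[OF Psi_continuous]) (auto intro!: always_eventually u_powr_le)
  moreover have "(\<lambda>k. u 1 k powr p) \<longlonglongrightarrow> 0"
    using p one_over_Suc_powr_tendsto_zero[of p] by (simp add: u_def)
  then have "(\<lambda>k. Psi (u 1 k powr p)) \<longlonglongrightarrow> Psi 0"
    by (rule continuous_on_tendsto_compose[OF Psi_continuous]) (auto intro!: always_eventually u_powr_le)
  ultimately have "(\<lambda>k. Psi (u k k powr p) / p\<^sup>2 - Psi (u 1 k powr p) / p\<^sup>2) \<longlonglongrightarrow> Psi 1 / p\<^sup>2 - Psi 0 / p\<^sup>2"
    using p by (intro tendsto_intros) auto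
  then show ?thesis unfolding Theta_def by (simp add: Psi_def)
qed

lemma coeff_sum_decomposition:
  fixes k :: nat
  defines "w i \<equiv> u i k powr b / real i"
    and "r i \<equiv> 1 / (real k + 1) * inner_sum k i - (Phi (u i k) - Phi (u 1 k))"
  shows "(\<Sum>i=2..k. coeff k i) =
    (\<Sum>i=2..k. w i * Phi (u i k)) - Phi (u 1 k) * (\<Sum>i=2..k. w i) + (\<Sum>i=2..k. w i * r i)"
proof -
  have "coeff k i = w i * Phi (u i k) - Phi (u 1 k) * w i + w i * r i" for i
    unfolding coeff_def w_def r_def by (simp add: algebra_simps)
  then show ?thesis by (simp add: sum.distrib sum_subtractf sum_distrib_left)
qed

lemma coeff_sum_Theta_error_le:
  obtains e C1 C2 C3 where "0 < e" "\<And>k. 1 \<le> k \<Longrightarrow>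
    \<bar>(\<Sum>i=2..k. coeff k i) - (Theta (u k k) - Theta (u 1 k))\<bar>
      \<le> C1 * (1 / (real k + 1)) powr e + C2 * (1 / (real k + 1)) powr p
        + C3 * (1 / (real k + 1)) powr (p / 2)"
proof -
  obtain C where C: "0 \<le> C" "\<And>k i. 1 \<le> i \<Longrightarrow> i \<le> k \<Longrightarrow>
      \<bar>1 / (real k + 1) * inner_sum k i - (Phi (u i k) - Phi (u 1 k))\<bar> \<le> C * (1 / (real k + 1)) powr (p / 2)"
    using inner_sum_Riemann_error by blast
  obtain e C' where C': "0 < e" "\<And>k. 1 \<le> k \<Longrightarrow>
      \<bar>(\<Sum>i=2..k. u i k powr b / real i * Phi (u i k)) - (Theta (u k k) - Theta (u 1 k))\<bar>
        \<le> C' * (1 / (real k + 1)) powr e"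
    using outer_sum_Riemann_error by blast
  obtain B where B: "0 \<le> B" "\<And>t. t \<in> {0<..<1} \<Longrightarrow> \<bar>Phi t\<bar> \<le> B * t powr p"
    using Phi_bound by blast
  define W where "W = 1 + 1 / b"
  show ?thesis
  proof (rule that[of e C' "W * B" "W * C"])
    fix k :: nat assume k: "1 \<le> k"
    define h where "h = 1 / (real k + 1)"
    define w where "w i = u i k powr b / real i" for i
    define r where "r i = h * inner_sum k i - (Phi (u i k) - Phi (u 1 k))" for i
    have w: "0 \<le> (\<Sum>i=2..k. w i)" "(\<Sum>i=2..k. w i) \<le> W"
      using order_trans[OF sum_mono2 grid_weight_sum_le[OF b, of k]]
      unfolding w_def W_def by (auto intro: sum_nonneg)
    have "\<bar>Phi (u 1 k) * (\<Sum>i=2..k. w i)\<bar> \<le> (B * h powr p) * W"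
      unfolding abs_mult using B(2)[OF u_in_unit_interval[OF order_refl k]] B(1) w
      by (intro mult_mono) (auto simp: u_def h_def)
    moreover have "\<bar>w i * r i\<bar> \<le> w i * (C * h powr (p / 2))" if "i \<in> {2..k}" for i
    proof -
      have "\<bar>r i\<bar> \<le> C * h powr (p / 2)" using C(2)[of i k] that unfolding r_def h_def by auto
      moreover have "0 \<le> w i" unfolding w_def by simp
      ultimately show ?thesis by (simp add: abs_mult mult_left_mono)
    qed
    then have "\<bar>\<Sum>i=2..k. w i * r i\<bar> \<le> (\<Sum>i=2..k. w i) * (C * h powr (p / 2))"
      unfolding sum_distrib_right by (intro order_trans[OF sum_abs sum_mono]) auto
    moreover have "(\<Sum>i=2..k. w i) * (C * h powr (p / 2)) \<le> W * (C * h powr (p / 2))"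
      using w C(1) by (intro mult_right_mono) auto
    ultimately show "\<bar>(\<Sum>i=2..k. coeff k i) - (Theta (u k k) - Theta (u 1 k))\<bar>
        \<le> C' * (1 / (real k + 1)) powr e + W * B * (1 / (real k + 1)) powr p
          + W * C * (1 / (real k + 1)) powr (p / 2)"
      using C'(2)[OF k] coeff_sum_decomposition[of k]
      unfolding h_def[symmetric] w_def[symmetric] r_def[symmetric]
      by (simp add: mult_ac)
  qed (use C' in auto)
qed

lemma coeff_sum_Theta_error_tendsto_zero:
  "(\<lambda>k. (\<Sum>i=2..k. coeff k i) - (Theta (u k k) - Theta (u 1 k))) \<longlonglongrightarrow> 0"
proof -
  obtain e C1 C2 C3 where e: "0 < e" and error: "\<And>k. 1 \<le> k \<Longrightarrow>
    \<bar>(\<Sum>i=2..k. coeff k i) - (Theta (u k k) - Theta (u 1 k))\<bar>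
      \<le> C1 * (1 / (real k + 1)) powr e + C2 * (1 / (real k + 1)) powr p
        + C3 * (1 / (real k + 1)) powr (p / 2)"
    using coeff_sum_Theta_error_le by metis
  have lim: "(\<lambda>k. C1 * (1 / (real k + 1)) powr e + C2 * (1 / (real k + 1)) powr p
      + C3 * (1 / (real k + 1)) powr (p / 2)) \<longlonglongrightarrow> 0"
    using p e by (intro tendsto_add_zero tendsto_mult_right_zero one_over_Suc_powr_tendsto_zero) auto
  have "\<forall>\<^sub>F k in sequentially. norm ((\<Sum>i=2..k. coeff k i) - (Theta (u k k) - Theta (u 1 k)))
      \<le> C1 * (1 / (real k + 1)) powr e + C2 * (1 / (real k + 1)) powr p
        + C3 * (1 / (real k + 1)) powr (p / 2)"
    using error by (intro eventually_sequentiallyI[of 1]) simp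
  from Lim_null_comparison[OF this lim] show ?thesis .
qed

lemma coeff_sum_lim: "(\<lambda>k. \<Sum>i=2..k. coeff k i) \<longlonglongrightarrow> integral {0..1} psi / p\<^sup>2"
  using tendsto_add[OF coeff_sum_Theta_error_tendsto_zero Theta_grid_endpoints_lim] by simp

end

theorem lemma2:
  fixes M :: "'a measure" and E :: "nat \<Rightarrow> 'a \<Rightarrow> real"
    and K K' K'' :: "real \<Rightarrow> real"
    and p \<gamma> \<beta> :: real
  assumes p: "0 < p" "p < 1" and gam: "\<gamma> > 0" and beta: "\<beta> > 0"
    \<comment> \<open>[A1] (on the support)\<close>
    and A1_mono: "\<And>x y. 0 < x \<Longrightarrow> x \<le> y \<Longrightarrow> K y \<le> K x"
    and A1_rc: "\<And>x. 0 < x \<Longrightarrow> continuous (at_right x) K"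
    \<comment> \<open>[A2]\<close>
    and A2_out: "\<And>s. s \<notin> {0<..1} \<Longrightarrow> K s = 0"
    and A2_nonneg: "\<And>s. s \<in> {0<..1} \<Longrightarrow> K s \<ge> 0"
    \<comment> \<open>[A3]\<close>
    and A3: "(K has_integral 1) UNIV"
    \<comment> \<open>[A4]\<close>
    and A4_d1: "\<And>x. x \<in> {0<..<1} \<Longrightarrow> (K has_real_derivative K' x) (at x)"
    and A4_d2: "\<And>x. x \<in> {0<..<1} \<Longrightarrow> (K' has_real_derivative K'' x) (at x)"
    and A4_bdd: "bounded (range K)" "bounded (K' ` {0<..<1})" "bounded (K'' ` {0<..<1})"
    \<comment> \<open>E_1, E_2, ... iid standard exponential\<close>
    and M: "prob_space M"
    and indep: "prob_space.indep_vars M (\<lambda>_. borel) E {1..}"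
    and expo: "\<And>i. i \<ge> 1 \<Longrightarrow> distributed M lborel (E i) (exponential_density 1)"
  shows "conv_in_prob M
           (\<lambda>k \<omega>. 1 / (real k + 1) *
              (\<Sum>i = 2..k. u i k powr (\<beta> * \<gamma>) *
                 ((1 / real i) * (\<Sum>j = 2..i. u j k powr (p - 1) * deriv (gK K) (u j k powr p)))
                 * E i \<omega>))
           (1 / p\<^sup>2 * integral {0..1} (\<lambda>t. t powr ((\<gamma> / p) * \<beta>) * K t))"
proof -
  interpret prob_space M by (rule M)
  have "0 \<le> K x" for x
    using A2_out[of x] A2_nonneg[of x] by (cases "x \<in> {0<..1}") auto
  then have "K absolutely_integrable_on {0..1}"
    using integrable_on_subinterval[OF has_integral_integrable[OF A3]]
    by (intro nonnegative_absolutely_integrable_1) auto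
  then interpret smooth_kernel K K' K'' p "\<beta> * \<gamma>"
    using p gam beta A4_d1 A4_d2 A4_bdd bounded_subset[OF A4_bdd(1) image_mono]
    by unfold_locales auto
  have "conv_in_prob M (\<lambda>k \<omega>. \<Sum>i\<in>{2..k}. coeff k i * E i \<omega>) (1 * (integral {0..1} psi / p\<^sup>2))"
    using indep standard_exponential_moments[OF expo] coeff_sum_lim coeff_square_sum_tendsto_zero
    by (intro conv_in_prob_indep_weighted_sum) auto
  moreover have "(\<lambda>k \<omega>. \<Sum>i\<in>{2..k}. coeff k i * E i \<omega>) = (\<lambda>k \<omega>. 1 / (real k + 1) *
      (\<Sum>i = 2..k. u i k powr (\<beta> * \<gamma>) *
         ((1 / real i) * (\<Sum>j = 2..i. u j k powr (p - 1) * deriv (gK K) (u j k powr p))) * E i \<omega>))"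
    unfolding coeff_def inner_sum_def by (intro ext) (simp add: sum_distrib_left mult_ac)
  moreover have "psi = (\<lambda>t. t powr ((\<gamma> / p) * \<beta>) * K t)"
    by (simp add: psi_def[abs_def] mult.commute)
  ultimately show ?thesis by simp
qed

end
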